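(* Let $\mathcal{N}\subset\mathbb{R}^d$ be compact, $T>0$, $x^0,x^1\in\mathbb{R}^N$, and let $\nu\mapsto(\mathbf{A}(\nu),\mathbf{B}(\nu))\in\mathbb{R}^{N\times N}\times\mathbb{R}^{N\times M}$ be Lipschitz continuous on $\mathcal{N}$. Assume the uniform controllability condition: there are constants $0<\Lambda_-\le\Lambda_+$ with $\Lambda_- I\le \Lambda_\nu\le\Lambda_+ I$ (as quadratic forms) for all $\nu\in\mathcal{N}$, where $\Lambda_\nu$ is the Gramian defined in the context. For $\nu\in\mathcal N$ let $\varphi^0_\nu\in\mathbb{R}^N$ be the unique solution of $\Lambda_\nu\varphi^0_\nu=x^1-e^{T\mathbf{A}_\nu}x^0$, and let $C_\varphi$ be the Lipschitz constant of the map $\nu\mapsto\varphi^0_\nu$. Given $\varepsilon>0$, run the offline greedy control algorithm (described in the context) with a discretisation constant $\delta$ satisfying $\delta\le \varepsilon/(2C_\varphi\Lambda_-)$, and suppose it selects $n\ge1$ parameter values $\nu_1,\dots,\nu_n$ with corresponding vectors $\varphi^0_j:=\varphi^0_{\nu_j}$; write $\Phi^0_j=\mathrm{span}\{\varphi^0_1,\dots,\varphi^0_j\}$. Then, with $\gamma=\Lambda_-/(2\Lambda_+)\le 1/2$, $$|\varphi^0_1|\ge\gamma\max_{\nu\in\mathcal N}|\varphi^0_\nu|,\qquad \mathrm{dist}(\varphi^0_{j+1},\Phi^0_j)\ge\gamma\max_{\nu\in\mathcal N}\mathrm{dist}(\varphi^0_\nu,\Phi^0_j)\ \ (j=1,\dots,n-1),$$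 i.e. the algorithm is a weak greedy algorithm with constant $\gamma$ for the compact set $\{\varphi^0_\nu:\nu\in\mathcal N\}$, and the final approximation error satisfies $$\max_{\nu\in\mathcal N}\mathrm{dist}(\varphi^0_\nu,\Phi^0_n)<\varepsilon/\Lambda_- .$$
   Context: Control system (for each parameter $\nu\in\mathcal N$): $x'(t)=\mathbf{A}_\nu x(t)+\mathbf{B}_\nu u(t)$, $0<t<T$, $x(0)=x^0$, with $\mathbf{A}_\nu=\mathbf{A}(\nu)$, $\mathbf{B}_\nu=\mathbf{B}(\nu)$. Its (controllability) Gramian is $\Lambda_\nu=\int_0^T e^{(T-t)\mathbf{A}_\nu}\mathbf{B}_\nu\mathbf{B}_\nu^{*}e^{(T-t)\mathbf{A}_\nu^{*}}\,dt$. The vector $\varphi^0_\nu=\Lambda_\nu^{-1}(x^1-e^{T\mathbf A_\nu}x^0)$ is the minimiser of $J_\nu(\varphi^0)=\frac12\int_0^T|\mathbf B_\nu^*\varphi(t)|^2dt-\langle x^1,\varphi^0\rangle+\langle x^0,\varphi(0)\rangle$, where $\varphi(t)=e^{(T-t)\mathbf A_\nu^*}\varphi^0$, and $u_\nu=\mathbf B_\nu^*e^{(T-t)\mathbf A_\nu^*}\varphi^0_\nu$ is the minimal $L^2$-norm control steering $x^0$ to $x^1$. For a subspace $\Phi\subset\mathbb R^N$, $\Lambda_\nu\Phi=\{\Lambda_\nu\psi:\psi\in\Phi\}$; $\mathrm{dist}$ is Euclidean distance. Offline greedy control algorithm with tolerance $\varepsilon>0$ and discretisation constant $\delta>0$: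 Step 1: choose a finite set $\tilde{\mathcal N}\subset\mathcal N$ with $\mathrm{dist}(\nu,\tilde{\mathcal N})<\delta$ for all $\nu\in\mathcal N$. Step 2: if $\max_{\tilde\nu\in\tilde{\mathcal N}}|x^1-e^{T\mathbf A_{\tilde\nu}}x^0|<\varepsilon/2$ stop (with $n=0$); otherwise let $\nu_1$ be a maximiser of $\tilde\nu\mapsto|x^1-e^{T\mathbf A_{\tilde\nu}}x^0|$ over $\tilde{\mathcal N}$ and set $\varphi^0_1=\varphi^0_{\nu_1}$. Step 3: having $\nu_1,\dots,\nu_j$, if $\max_{\tilde\nu\in\tilde{\mathcal N}}\mathrm{dist}(x^1-e^{T\mathbf A_{\tilde\nu}}x^0,\Lambda_{\tilde\nu}\Phi^0_j)<\varepsilon/2$ stop (with $n=j$); otherwise let $\nu_{j+1}$ be a maximiser over $\tilde{\mathcal N}$ of $\tilde\nu\mapsto \mathrm{dist}(x^1-e^{T\mathbf A_{\tilde\nu}}x^0,\Lambda_{\tilde\nu}\Phi^0_j)$, set $\varphi^0_{j+1}=\varphi^0_{\nu_{j+1}}$ and repeat Step 3. *)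

theory Defs
  imports "HOL-Analysis.Analysis"
begin

definition matpow :: "real^'n^'n \<Rightarrow> nat \<Rightarrow> real^'n^'n" where
  "matpow A k = (((**) A) ^^ k) (mat 1)"

definition mexp :: "real^'n^'n \<Rightarrow> real^'n^'n" where
  "mexp A = (\<Sum>k. (1 / fact k) *\<^sub>R matpow A k)"

definition gramian :: "real^'n^'n \<Rightarrow> real^'m^'n \<Rightarrow> real \<Rightarrow> real^'n^'n" where
  "gramian A B T = integral {0..T}
     (\<lambda>t. mexp ((T - t) *\<^sub>R A) ** B ** transpose B ** mexp ((T - t) *\<^sub>R transpose A))"

definition phi0 :: "('d \<Rightarrow> real^'n^'n) \<Rightarrow> ('d \<Rightarrow> real^'m^'n) \<Rightarrow> real
                    \<Rightarrow> real^'n \<Rightarrow> real^'n \<Rightarrow> 'd \<Rightarrow> real^'n" where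
  "phi0 A B T x0 x1 \<nu> = matrix_inv (gramian (A \<nu>) (B \<nu>) T) *v (x1 - mexp (T *\<^sub>R A \<nu>) *v x0)"

end

theory Submission
  imports Defs
begin

text \<open>The Gramian is symmetric, so the uniform bounds \<open>Lm I \<le> \<Lambda>\<^sub>\<nu> \<le> Lp I\<close> make
  \<open>\<psi> \<mapsto> \<Lambda>\<^sub>\<nu> \<psi>\<close> bi-Lipschitz with constants \<open>Lm\<close>, \<open>Lp\<close>. Hence the residual
  \<open>dist (x\<^sup>1 - e\<^bsup>T A\<^sub>\<nu>\<^esup> x\<^sup>0, \<Lambda>\<^sub>\<nu> \<Phi>)\<close> maximised by the algorithm lies between
  \<open>Lm\<close> and \<open>Lp\<close> times \<open>dist (\<phi>\<^sub>\<nu>, \<Phi>)\<close>. The latter is \<open>C\<close>-Lipschitz in \<open>\<nu>\<close>, so its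
  supremum over the parameter set exceeds its maximum over the \<open>\<delta>\<close>-net by at most
  \<open>C \<delta> \<le> \<epsilon> / (2 Lm)\<close>. While the algorithm runs, the maximal residual is at least
  \<open>\<epsilon> / 2\<close> and absorbs this slack, which yields the weak greedy constant \<open>Lm / (2 Lp)\<close>;
  when it stops, the same estimate bounds the final error by \<open>\<epsilon> / Lm\<close>.\<close>

lemma matrix_add_rdistrib: "(B + C) ** A = B ** A + C ** A"
  for A :: "real^'p^'n" and B C :: "real^'n^'m"
  by (vector matrix_matrix_mult_def sum.distrib[symmetric] field_simps)

lemma bounded_bilinear_matrix_mult:
  "bounded_bilinear ((**) :: real^'n^'m \<Rightarrow> real^'p^'n \<Rightarrow> real^'p^'m)"
  unfolding bilinear_conv_bounded_bilinear[symmetric] bilinear_def linear_iff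
  by (auto simp: matrix_add_ldistrib matrix_add_rdistrib scalar_matrix_assoc matrix_scalar_ac)

lemma matpow_Suc: "matpow A (Suc k) = A ** matpow A k"
  by (simp add: matpow_def)

lemma matpow_Suc_right: "matpow A (Suc k) = matpow A k ** A"
  by (induction k) (simp_all add: matpow_def matrix_mul_assoc)

lemma transpose_matpow: "transpose (matpow A k) = matpow (transpose A) k"
proof (induction k)
  case 0
  then show ?case by (simp add: matpow_def)
next
  case (Suc k)
  have "transpose (matpow A (Suc k)) = transpose A ** transpose (matpow A k)"
    by (simp only: matpow_Suc_right matrix_transpose_mul)
  then show ?case by (simp only: Suc matpow_Suc)
qed

lemma norm_matpow_le:
  fixes A :: "real^'n^'n"
  assumes "\<And>(a :: real^'n^'n) (b :: real^'n^'n). norm (a ** b) \<le> norm a * norm b * K" and "0 \<le> K"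
  shows "norm (matpow A k) \<le> norm (mat 1 :: real^'n^'n) * (K * norm A) ^ k"
proof (induction k)
  case 0
  then show ?case by (simp add: matpow_def)
next
  case (Suc k)
  have "norm (matpow A (Suc k)) \<le> norm A * norm (matpow A k) * K"
    unfolding matpow_Suc by (rule assms(1))
  also have "\<dots> \<le> norm A * (norm (mat 1 :: real^'n^'n) * (K * norm A) ^ k) * K"
    using Suc assms(2) by (intro mult_right_mono mult_left_mono) auto
  finally show ?case by (simp add: algebra_simps)
qed

lemma summable_mexp: "summable (\<lambda>k. (1 / fact k) *\<^sub>R matpow (A :: real^'n^'n) k)"
proof -
  obtain K where K: "0 < K" "\<And>(a :: real^'n^'n) (b :: real^'n^'n). norm (a ** b) \<le> norm a * norm b * K"
    using bounded_bilinear.pos_bounded[OF bounded_bilinear_matrix_mult] by blast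
  have "summable (\<lambda>k. norm (mat 1 :: real^'n^'n) * (inverse (fact k) * (K * norm A) ^ k))"
    by (intro summable_mult summable_exp)
  then show ?thesis
    by (rule summable_comparison_test'[where N = 0])
      (use norm_matpow_le[OF K(2)] K(1) in \<open>auto simp: divide_inverse mult.left_commute
        intro!: mult_left_mono\<close>)
qed

lemma bounded_linear_transpose: "bounded_linear (transpose :: real^'n^'m \<Rightarrow> real^'m^'n)"
  unfolding linear_conv_bounded_linear[symmetric]
  by (rule linearI) (simp_all add: transpose_def vec_eq_iff)

lemma transpose_mexp: "transpose (mexp A) = mexp (transpose (A :: real^'n^'n))"
  unfolding mexp_def bounded_linear.suminf[OF bounded_linear_transpose summable_mexp]
  by (simp add: transpose_scalar transpose_matpow)

lemma transpose_gramian: "transpose (gramian A B T) = gramian A B T"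
proof -
  let ?f = "\<lambda>t. mexp ((T - t) *\<^sub>R A) ** B ** transpose B ** mexp ((T - t) *\<^sub>R transpose A)"
  have transpose_f: "transpose (?f t) = ?f t" for t
    by (simp add: matrix_transpose_mul transpose_mexp transpose_scalar matrix_mul_assoc)
  show ?thesis
  proof (cases "?f integrable_on {0..T}")
    case True
    then show ?thesis
      unfolding gramian_def integral_linear[OF True bounded_linear_transpose, symmetric]
      by (simp add: o_def transpose_f)
  next
    case False
    then show ?thesis
      by (simp add: gramian_def not_integrable_integral transpose_def vec_eq_iff)
  qed
qed

lemma coercive_norm_ge:
  fixes f :: "'a::real_inner \<Rightarrow> 'a"
  assumes "\<forall>x. L * (x \<bullet> x) \<le> x \<bullet> f x"
  shows "L * norm y \<le> norm (f y)"
proof (cases "y = 0")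
  case True
  then show ?thesis by simp
next
  case False
  have "L * norm y * norm y \<le> y \<bullet> f y"
    using assms by (simp add: dot_square_norm power2_eq_square mult.assoc)
  also have "\<dots> \<le> norm (f y) * norm y"
    using norm_cauchy_schwarz[of y "f y"] by (simp add: mult.commute)
  finally show ?thesis using False by simp
qed

text \<open>Polarisation of the quadratic form at \<open>u = f y\<close>, \<open>v = L y\<close> gives
  \<open>4 L |f y|\<^sup>2 \<le> 2 L (|f y|\<^sup>2 + L\<^sup>2 |y|\<^sup>2)\<close>.\<close>

lemma selfadjoint_norm_le:
  fixes f :: "'a::real_inner \<Rightarrow> 'a"
  assumes "linear f" and selfadjoint: "\<forall>x y. x \<bullet> f y = y \<bullet> f x" and "0 < L"
    and nonneg: "\<forall>x. 0 \<le> x \<bullet> f x" and le: "\<forall>x. x \<bullet> f x \<le> L * (x \<bullet> x)"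
  shows "norm (f y) \<le> L * norm y"
proof -
  define u v where "u = f y" and "v = L *\<^sub>R y"
  have "4 * L * (u \<bullet> u) = 4 * (u \<bullet> f v)"
    by (simp add: u_def v_def linear_scale[OF assms(1)])
  also have "\<dots> = (u + v) \<bullet> f (u + v) - (u - v) \<bullet> f (u - v)"
    using selfadjoint[rule_format, of v u]
    by (simp add: linear_add[OF assms(1)] linear_diff[OF assms(1)] inner_add inner_diff)
  also have "\<dots> \<le> L * ((u + v) \<bullet> (u + v)) + L * ((u - v) \<bullet> (u - v))"
    using le nonneg \<open>0 < L\<close> by (smt (verit) inner_ge_zero mult_nonneg_nonneg)
  also have "\<dots> = 2 * L * (u \<bullet> u) + 2 * L * (L * L * (y \<bullet> y))"
    by (simp add: v_def inner_add inner_diff inner_commute algebra_simps)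
  finally have "u \<bullet> u \<le> (L *\<^sub>R y) \<bullet> (L *\<^sub>R y)"
    using \<open>0 < L\<close> by simp
  then show ?thesis
    using norm_le[of u "L *\<^sub>R y"] \<open>0 < L\<close> by (simp add: u_def)
qed

lemma symmetric_matrix_inner:
  fixes G :: "real^'n^'n"
  assumes "transpose G = G"
  shows "x \<bullet> (G *v y) = y \<bullet> (G *v x)"
  by (metis assms dot_lmul_matrix inner_commute transpose_matrix_vector)

lemma matrix_inv_solves_coercive:
  fixes G :: "real^'n^'n"
  assumes "0 < L" and "\<forall>x. L * (x \<bullet> x) \<le> x \<bullet> (G *v x)"
  shows "G *v (matrix_inv G *v r) = r"
proof -
  have "G *v x = 0 \<Longrightarrow> x = 0" for x
    using coercive_norm_ge[of L "(*v) G" x] assms by (auto simp: mult_le_0_iff)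
  then have "invertible G"
    using matrix_left_invertible_ker invertible_left_inverse by blast
  then have "G ** matrix_inv G = mat 1"
    unfolding invertible_def matrix_inv_def by (rule someI2_ex) blast
  then show ?thesis by (simp add: matrix_vector_mul_assoc)
qed

lemma infdist_image_le:
  assumes "L-lipschitz_on UNIV f"
  shows "infdist (f x) (f ` V) \<le> L * infdist x V"
proof (cases "V = {}")
  case False
  have dist_le: "infdist (f x) (f ` V) \<le> L * dist x v" if "v \<in> V" for v
    using infdist_le[of "f v" "f ` V" "f x"] lipschitz_onD[OF assms, of x v] that by simp
  show ?thesis
  proof (cases "L = 0")
    case True
    with dist_le False show ?thesis by auto
  next
    case False
    then have "0 < L" using lipschitz_on_nonneg[OF assms] by simp
    have "infdist (f x) (f ` V) / L \<le> infdist x V"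
      unfolding infdist_notempty[OF \<open>V \<noteq> {}\<close>]
      by (rule cINF_greatest[OF \<open>V \<noteq> {}\<close>]) (use dist_le \<open>0 < L\<close> in \<open>simp add: field_simps\<close>)
    with \<open>0 < L\<close> show ?thesis by (simp add: field_simps)
  qed
qed (simp add: infdist_def)

lemma infdist_image_ge:
  assumes "0 \<le> L" and "\<And>a b. L * dist a b \<le> dist (f a) (f b)"
  shows "L * infdist x V \<le> infdist (f x) (f ` V)"
proof (cases "V = {}")
  case False
  show ?thesis
    unfolding infdist_notempty[OF False] infdist_notempty[OF False[folded image_is_empty[of f]]]
      image_image
  proof (rule cINF_greatest[OF False])
    fix v assume "v \<in> V"
    then have "L * (INF v\<in>V. dist x v) \<le> L * dist x v"
      using assms(1) infdist_le[of v V x] by (simp add: infdist_notempty[OF False] mult_left_mono)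
    also have "\<dots> \<le> dist (f x) (f v)" by (rule assms(2))
    finally show "L * (INF v\<in>V. dist x v) \<le> dist (f x) (f v)" .
  qed
qed (simp add: infdist_def)

lemma lipschitz_on_infdist: "1-lipschitz_on U (\<lambda>x. infdist x A)"
  by (rule lipschitz_onI) (simp_all add: dist_real_def infdist_triangle_abs)

lemma infdist_matrix_inv_bounds:
  fixes G :: "real^'n^'n"
  assumes "transpose G = G" and "0 < Lm" and "Lm \<le> Lp"
    and quadratic_bounds: "\<forall>x. Lm * (x \<bullet> x) \<le> x \<bullet> (G *v x) \<and> x \<bullet> (G *v x) \<le> Lp * (x \<bullet> x)"
  shows "Lm * infdist (matrix_inv G *v r) V \<le> infdist r ((\<lambda>\<psi>. G *v \<psi>) ` V)
    \<and> infdist r ((\<lambda>\<psi>. G *v \<psi>) ` V) \<le> Lp * infdist (matrix_inv G *v r) V"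
proof -
  have ge: "Lm * norm z \<le> norm (G *v z)" for z
    using coercive_norm_ge[of Lm "(*v) G"] quadratic_bounds by blast
  have le: "norm (G *v z) \<le> Lp * norm z" for z
    using selfadjoint_norm_le[of "(*v) G" Lp] quadratic_bounds assms(1-3)
      symmetric_matrix_inner[OF assms(1)]
    by (smt (verit) inner_ge_zero matrix_vector_mul_linear mult_nonneg_nonneg)
  note dist_image = dist_norm matrix_vector_mult_diff_distrib[symmetric]
  have "Lp-lipschitz_on UNIV ((*v) G)"
    using le assms(2,3) by (intro lipschitz_onI) (simp_all add: dist_image)
  moreover have "Lm * dist a b \<le> dist (G *v a) (G *v b)" for a b
    using ge by (simp add: dist_image)
  ultimately show ?thesis
    using infdist_image_le[of Lp "(*v) G"] infdist_image_ge[of Lm "(*v) G"] assms(2)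
      matrix_inv_solves_coercive[of Lm G r] quadratic_bounds
    by (metis less_imp_le)
qed

locale finite_delta_net =
  fixes NN :: "'a::metric_space set" and Nt :: "'a set" and \<delta> :: real
  assumes finite_net: "finite Nt" and net_subset: "Nt \<subseteq> NN" and net_nonempty: "Nt \<noteq> {}"
    and net_dense: "\<forall>\<mu>\<in>NN. infdist \<mu> Nt < \<delta>"
begin

lemma SUP_le_Max_net:
  fixes e R :: "'a \<Rightarrow> real"
  assumes "C-lipschitz_on NN e" and "0 < Lm" and "\<forall>\<mu>\<in>Nt. Lm * e \<mu> \<le> R \<mu>"
  shows "(SUP \<mu>\<in>NN. e \<mu>) \<le> Max (R ` Nt) / Lm + C * \<delta>"
proof (rule cSUP_least)
  show "NN \<noteq> {}" using net_subset net_nonempty by blast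
  fix \<mu> assume "\<mu> \<in> NN"
  have "(INF a\<in>Nt. dist \<mu> a) < \<delta>"
    using net_dense \<open>\<mu> \<in> NN\<close> infdist_notempty[OF net_nonempty] by simp
  then obtain a where a: "a \<in> Nt" "dist \<mu> a < \<delta>"
    using cInf_lessD[of "dist \<mu> ` Nt"] net_nonempty by blast
  have "e \<mu> \<le> e a + C * dist \<mu> a"
    using lipschitz_onD[OF assms(1) \<open>\<mu> \<in> NN\<close>, of a] a(1) net_subset
    by (auto simp: dist_real_def)
  also have "C * dist \<mu> a \<le> C * \<delta>"
    using a(2) lipschitz_on_nonneg[OF assms(1)] by (simp add: mult_left_mono)
  also have "Lm * e a \<le> Max (R ` Nt)"
    using assms(3) a(1) finite_net by (metis Max_ge finite_imageI imageI order_trans)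
  then have "e a \<le> Max (R ` Nt) / Lm"
    using assms(2) by (simp add: field_simps)
  finally show "e \<mu> \<le> Max (R ` Nt) / Lm + C * \<delta>" by simp
qed

lemma weak_greedy_step:
  fixes e R :: "'a \<Rightarrow> real"
  assumes "C-lipschitz_on NN e" and "0 < Lm" and "0 < Lp"
    and bounds: "\<forall>\<mu>\<in>NN. Lm * e \<mu> \<le> R \<mu> \<and> R \<mu> \<le> Lp * e \<mu>"
    and "2 * C * Lm * \<delta> \<le> \<epsilon>"
    and "\<nu> \<in> Nt" and "R \<nu> = Max (R ` Nt)" and "\<epsilon> / 2 \<le> Max (R ` Nt)"
  shows "Lm / (2 * Lp) * (SUP \<mu>\<in>NN. e \<mu>) \<le> e \<nu>"
proof -
  have "(SUP \<mu>\<in>NN. e \<mu>) \<le> R \<nu> / Lm + C * \<delta>"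
    using SUP_le_Max_net[OF assms(1,2)] bounds net_subset assms(7) by auto
  also have "C * \<delta> \<le> R \<nu> / Lm"
    using assms(2,5,7,8) by (simp add: field_simps)
  also have "R \<nu> / Lm + R \<nu> / Lm \<le> 2 * Lp * e \<nu> / Lm"
    using bounds assms(2,6) net_subset by (auto simp: field_simps)
  finally show ?thesis
    using assms(2,3) by (simp add: field_simps)
qed

lemma greedy_stop:
  fixes e R :: "'a \<Rightarrow> real"
  assumes "C-lipschitz_on NN e" and "0 < Lm" and "\<forall>\<mu>\<in>NN. Lm * e \<mu> \<le> R \<mu>"
    and "2 * C * Lm * \<delta> \<le> \<epsilon>" and "Max (R ` Nt) < \<epsilon> / 2"
  shows "(SUP \<mu>\<in>NN. e \<mu>) < \<epsilon> / Lm"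
proof -
  have "(SUP \<mu>\<in>NN. e \<mu>) \<le> Max (R ` Nt) / Lm + C * \<delta>"
    using SUP_le_Max_net[OF assms(1,2)] assms(3) net_subset by auto
  moreover have "Max (R ` Nt) / Lm < \<epsilon> / (2 * Lm)"
    using assms(2,5) by (simp add: field_simps)
  moreover have "C * \<delta> \<le> \<epsilon> / (2 * Lm)"
    using assms(2,4) by (simp add: field_simps)
  ultimately show ?thesis by simp
qed

end

theorem theorem2:
  fixes NN :: "(real^'d) set"
    and A :: "real^'d \<Rightarrow> real^'n^'n"
    and B :: "real^'d \<Rightarrow> real^'m^'n"
    and T :: real and x0 x1 :: "real^'n"
    and Lm Lp C \<epsilon> \<delta> :: real
    and Nt :: "(real^'d) set"
    and n :: nat and \<nu> :: "nat \<Rightarrow> real^'d"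
  assumes "compact NN"
    and "T > 0"
    and "\<exists>LA. LA-lipschitz_on NN A"
    and "\<exists>LB. LB-lipschitz_on NN B"
    and "0 < Lm" and "Lm \<le> Lp"
    and "\<forall>\<mu>\<in>NN. \<forall>x. Lm * (x \<bullet> x) \<le> x \<bullet> (gramian (A \<mu>) (B \<mu>) T *v x)
                     \<and> x \<bullet> (gramian (A \<mu>) (B \<mu>) T *v x) \<le> Lp * (x \<bullet> x)"
    and "C-lipschitz_on NN (phi0 A B T x0 x1)"
    and "\<epsilon> > 0" and "\<delta> > 0" and "2 * C * Lm * \<delta> \<le> \<epsilon>"
    \<comment> \<open>Step 1\<close>
    and "finite Nt" and "Nt \<subseteq> NN"
    and "\<forall>\<mu>\<in>NN. infdist \<mu> Nt < \<delta>"
    \<comment> \<open>Step 2 (no stop, nu_1 a maximiser)\<close>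
    and "n \<ge> 1"
    and "\<nu> 1 \<in> Nt"
    and "norm (x1 - mexp (T *\<^sub>R A (\<nu> 1)) *v x0)
           = Max ((\<lambda>\<mu>. norm (x1 - mexp (T *\<^sub>R A \<mu>) *v x0)) ` Nt)"
    and "Max ((\<lambda>\<mu>. norm (x1 - mexp (T *\<^sub>R A \<mu>) *v x0)) ` Nt) \<ge> \<epsilon> / 2"
    \<comment> \<open>Step 3 for j = 1..n-1 (no stop, nu_(j+1) a maximiser)\<close>
    and "\<forall>j\<in>{1..<n}. \<nu> (j+1) \<in> Nt
           \<and> infdist (x1 - mexp (T *\<^sub>R A (\<nu> (j+1))) *v x0)
                 ((\<lambda>\<psi>. gramian (A (\<nu> (j+1))) (B (\<nu> (j+1))) T *v \<psi>)
                    ` span (phi0 A B T x0 x1 ` \<nu> ` {1..j}))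
             = Max ((\<lambda>\<mu>. infdist (x1 - mexp (T *\<^sub>R A \<mu>) *v x0)
                 ((\<lambda>\<psi>. gramian (A \<mu>) (B \<mu>) T *v \<psi>)
                    ` span (phi0 A B T x0 x1 ` \<nu> ` {1..j}))) ` Nt)
           \<and> Max ((\<lambda>\<mu>. infdist (x1 - mexp (T *\<^sub>R A \<mu>) *v x0)
                 ((\<lambda>\<psi>. gramian (A \<mu>) (B \<mu>) T *v \<psi>)
                    ` span (phi0 A B T x0 x1 ` \<nu> ` {1..j}))) ` Nt) \<ge> \<epsilon> / 2"
    \<comment> \<open>Step 3 at j = n: stop\<close>
    and "Max ((\<lambda>\<mu>. infdist (x1 - mexp (T *\<^sub>R A \<mu>) *v x0)
                 ((\<lambda>\<psi>. gramian (A \<mu>) (B \<mu>) T *v \<psi>)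
                    ` span (phi0 A B T x0 x1 ` \<nu> ` {1..n}))) ` Nt) < \<epsilon> / 2"
  shows "Lm / (2 * Lp) \<le> 1 / 2
    \<and> norm (phi0 A B T x0 x1 (\<nu> 1))
        \<ge> (Lm / (2 * Lp)) * (SUP \<mu>\<in>NN. norm (phi0 A B T x0 x1 \<mu>))
    \<and> (\<forall>j\<in>{1..<n}.
          infdist (phi0 A B T x0 x1 (\<nu> (j+1))) (span (phi0 A B T x0 x1 ` \<nu> ` {1..j}))
        \<ge> (Lm / (2 * Lp)) *
           (SUP \<mu>\<in>NN. infdist (phi0 A B T x0 x1 \<mu>) (span (phi0 A B T x0 x1 ` \<nu> ` {1..j}))))
    \<and> (SUP \<mu>\<in>NN. infdist (phi0 A B T x0 x1 \<mu>) (span (phi0 A B T x0 x1 ` \<nu> ` {1..n})))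
        < \<epsilon> / Lm"
proof -
  let ?G = "\<lambda>\<mu>. gramian (A \<mu>) (B \<mu>) T"
  let ?p = "phi0 A B T x0 x1"
  let ?R = "\<lambda>V \<mu>. infdist (x1 - mexp (T *\<^sub>R A \<mu>) *v x0) ((\<lambda>\<psi>. ?G \<mu> *v \<psi>) ` V)"
  \<comment> \<open>Compactness, \<open>T > 0\<close> and the Lipschitz continuity of \<open>A\<close> and \<open>B\<close> only serve to
    make the Lipschitz constant \<open>C\<close> of \<open>\<nu> \<mapsto> \<phi>\<^sub>\<nu>\<close> finite; the argument uses \<open>C\<close> directly.\<close>
  interpret finite_delta_net NN Nt \<delta>
    using assms(12-14,16) by unfold_locales auto
  have "0 < Lp" using assms(5,6) by linarith
  have residual_bounds: "\<forall>\<mu>\<in>NN. Lm * infdist (?p \<mu>) V \<le> ?R V \<mu> \<and> ?R V \<mu> \<le> Lp * infdist (?p \<mu>) V"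
    for V
    unfolding phi0_def using infdist_matrix_inv_bounds[OF transpose_gramian assms(5,6)] assms(7)
    by blast
  have lipschitz: "C-lipschitz_on NN (\<lambda>\<mu>. infdist (?p \<mu>) V)" for V
    using lipschitz_on_compose2[OF assms(8) lipschitz_on_infdist] by simp
  have step: "Lm / (2 * Lp) * (SUP \<mu>\<in>NN. infdist (?p \<mu>) V) \<le> infdist (?p \<nu>') V"
    if "\<nu>' \<in> Nt" "?R V \<nu>' = Max (?R V ` Nt)" "\<epsilon> / 2 \<le> Max (?R V ` Nt)" for V \<nu>'
    by (rule weak_greedy_step[OF lipschitz assms(5) \<open>0 < Lp\<close> residual_bounds assms(11) that])
  \<comment> \<open>The first selection is the step for \<open>\<Phi>\<^sup>0\<^sub>0 = span {} = {0}\<close>.\<close>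
  have "Lm / (2 * Lp) * (SUP \<mu>\<in>NN. norm (?p \<mu>)) \<le> norm (?p (\<nu> 1))"
    using step[of "\<nu> 1" "span {}"] assms(16-18) by (simp add: dist_norm)
  moreover have "\<forall>j\<in>{1..<n}. Lm / (2 * Lp) * (SUP \<mu>\<in>NN. infdist (?p \<mu>) (span (?p ` \<nu> ` {1..j})))
      \<le> infdist (?p (\<nu> (j + 1))) (span (?p ` \<nu> ` {1..j}))"
    using step assms(19) by blast
  moreover have "(SUP \<mu>\<in>NN. infdist (?p \<mu>) (span (?p ` \<nu> ` {1..n}))) < \<epsilon> / Lm"
    using greedy_stop[OF lipschitz assms(5) _ assms(11,20)] residual_bounds by blast
  moreover have "Lm / (2 * Lp) \<le> 1 / 2"
    using assms(5,6) by (simp add: field_simps)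
  ultimately show ?thesis by (simp add: mult.commute)
qed

end
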